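(* A $2$-connected graph $G$ satisfies $g(G)=c(G)$ if and only if $G$ is a cycle or a uniform theta graph.
   Context: All graphs are finite and simple. $g(G)$ is the girth (length of a shortest cycle) and $c(G)$ the circumference (length of a longest cycle) of $G$. The theta graph $\theta(l_1,\dots,l_k)$ is the graph obtained by joining two vertices by pairwise internally disjoint paths of lengths $l_1,\dots,l_k$. A theta graph is uniform if it has the form $\theta(a,a,\dots,a)$ (all paths of the same length $a$). *)

theory Defs
  imports Main
begin

definition simple_graph :: "'a set \<Rightarrow> ('a \<Rightarrow> 'a \<Rightarrow> bool) \<Rightarrow> bool" where
  "simple_graph V E \<longleftrightarrow> finite V \<and>
     (\<forall>x y. E x y \<longrightarrow> x \<in> V \<and> y \<in> V \<and> x \<noteq> y \<and> E y x)"

definition connected_on :: "'a set \<Rightarrow> ('a \<Rightarrow> 'a \<Rightarrow> bool) \<Rightarrow> bool" where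
  "connected_on S E \<longleftrightarrow> S \<noteq> {} \<and>
     (\<forall>x\<in>S. \<forall>y\<in>S. (\<lambda>a b. E a b \<and> a \<in> S \<and> b \<in> S)\<^sup>*\<^sup>* x y)"

definition two_connected :: "'a set \<Rightarrow> ('a \<Rightarrow> 'a \<Rightarrow> bool) \<Rightarrow> bool" where
  "two_connected V E \<longleftrightarrow> card V > 2 \<and> connected_on V E \<and>
     (\<forall>v\<in>V. connected_on (V - {v}) E)"

text \<open>A cycle of G given as the cyclic list of its distinct vertices; its length is the
  number of vertices (= number of edges).\<close>
definition is_cycle :: "'a set \<Rightarrow> ('a \<Rightarrow> 'a \<Rightarrow> bool) \<Rightarrow> 'a list \<Rightarrow> bool" where
  "is_cycle V E cs \<longleftrightarrow> length cs \<ge> 3 \<and> distinct cs \<and> set cs \<subseteq> V \<and>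
     (\<forall>i < length cs. E (cs ! i) (cs ! ((i + 1) mod length cs)))"

definition girth :: "'a set \<Rightarrow> ('a \<Rightarrow> 'a \<Rightarrow> bool) \<Rightarrow> nat" where
  "girth V E = Min {length cs | cs. is_cycle V E cs}"

definition circumference :: "'a set \<Rightarrow> ('a \<Rightarrow> 'a \<Rightarrow> bool) \<Rightarrow> nat" where
  "circumference V E = Max {length cs | cs. is_cycle V E cs}"

definition is_cycle_graph :: "'a set \<Rightarrow> ('a \<Rightarrow> 'a \<Rightarrow> bool) \<Rightarrow> bool" where
  "is_cycle_graph V E \<longleftrightarrow> (\<exists>xs. length xs \<ge> 3 \<and> distinct xs \<and> set xs = V \<and>
     (\<forall>x y. E x y \<longleftrightarrow> (\<exists>i < length xs.
        (x = xs ! i \<and> y = xs ! ((i + 1) mod length xs)) \<or>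
        (y = xs ! i \<and> x = xs ! ((i + 1) mod length xs)))))"

text \<open>G is a uniform theta graph theta(a,...,a): two distinct vertices u, w joined by
  k \<ge> 1 distinct, pairwise internally disjoint paths, each of length a (a edges, a+1 vertices);
  G consists exactly of these paths.\<close>
definition is_uniform_theta :: "'a set \<Rightarrow> ('a \<Rightarrow> 'a \<Rightarrow> bool) \<Rightarrow> bool" where
  "is_uniform_theta V E \<longleftrightarrow> (\<exists>u w (a::nat) Ps. u \<noteq> w \<and> a \<ge> 1 \<and> Ps \<noteq> [] \<and> distinct Ps \<and>
     (\<forall>P\<in>set Ps. length P = a + 1 \<and> distinct P \<and> hd P = u \<and> last P = w) \<and>
     (\<forall>i < length Ps. \<forall>j < length Ps. i \<noteq> j \<longrightarrow> set (Ps ! i) \<inter> set (Ps ! j) = {u, w}) \<and>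
     V = (\<Union>P\<in>set Ps. set P) \<and>
     (\<forall>x y. E x y \<longleftrightarrow> (\<exists>P\<in>set Ps. \<exists>i. Suc i < length P \<and>
        ((x = P ! i \<and> y = P ! Suc i) \<or> (y = P ! i \<and> x = P ! Suc i)))))"

end

theory Submission
  imports Defs
begin

text \<open>If all cycles have length n, any two internally disjoint x-y paths together form a
  cycle, so their lengths add up to n, and three pairwise internally disjoint x-y paths all have
  length n/2. By 2-connectedness, a cycle C that is not the whole graph has an ear; together with
  the two arcs of C it gives three such paths, hence a subgraph theta(a,a,a) with n = 2a. An ear of
  a uniform theta subgraph with at least three paths must join its two branch vertices, because
  otherwise one finds three internally disjoint paths of different lengths between two vertices;
  so it can be added as a further path of length a. When no ear is left, the theta subgraph is
  the whole graph.

  Conversely, in a cycle graph every cycle passes through all vertices, and in theta(a,...,a) the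
  inner vertices of the paths have degree two, so a cycle leaves a branch vertex along two
  complete paths and has length 2a.\<close>

section \<open>Paths and cycles\<close>

lemma simple_graph_sym: "simple_graph V E \<Longrightarrow> E x y \<Longrightarrow> E y x"
  unfolding simple_graph_def by blast

lemma simple_graph_successively_rev:
  "simple_graph V E \<Longrightarrow> successively E (rev xs) \<longleftrightarrow> successively E xs"
  unfolding successively_rev by (metis simple_graph_sym successively_mono)

lemma simple_graph_finite: "simple_graph V E \<Longrightarrow> finite V"
  unfolding simple_graph_def by blast

lemma simple_graph_irrefl: "simple_graph V E \<Longrightarrow> E x y \<Longrightarrow> x \<noteq> y"
  unfolding simple_graph_def by blast

lemma simple_graph_edge_in_V: "simple_graph V E \<Longrightarrow> E x y \<Longrightarrow> x \<in> V \<and> y \<in> V"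
  unfolding simple_graph_def by blast

lemma successively_Cons_append_Cons:
  "successively E (x # A @ y # R) \<longleftrightarrow> successively E (x # A @ [y]) \<and> successively E (y # R)"
  by (induction A arbitrary: x) (auto simp: successively_Cons)

lemma successively_rev_path:
  assumes "simple_graph V E" "successively E (x # L @ [y])"
  shows "successively E (y # rev L @ [x])"
  using simple_graph_successively_rev[OF assms(1), of "x # L @ [y]"] assms(2) by simp

lemma rtranclp_within_imp_path:
  assumes "(\<lambda>a b. E a b \<and> a \<in> T \<and> b \<in> T)\<^sup>*\<^sup>* p q" "p \<in> T"
  shows "\<exists>P. P \<noteq> [] \<and> hd P = p \<and> last P = q \<and> distinct P \<and> set P \<subseteq> T \<and> successively E P"
  using assms(1)
proof (induction rule: rtranclp_induct)
  case base
  show ?case using assms(2) by (intro exI[of _ "[p]"]) auto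
next
  case (step b c)
  then obtain P where P: "P \<noteq> []" "hd P = p" "last P = b" "distinct P" "set P \<subseteq> T"
    "successively E P"
    by blast
  show ?case
  proof (cases "c \<in> set P")
    case True
    then obtain P1 P2 where P12: "P = P1 @ c # P2" by (meson split_list)
    have "hd (P1 @ [c]) = p" using P(2) unfolding P12 by (cases P1) auto
    moreover have "successively E (P1 @ [c])"
      using P(6) unfolding P12 successively_append_iff by (simp add: successively_Cons)
    ultimately show ?thesis using P(4,5) unfolding P12 by (intro exI[of _ "P1 @ [c]"]) auto
  next
    case False
    have "successively E (P @ [c])"
      using P(1,3,6) step.hyps(2) by (simp add: successively_append_iff)
    moreover have "hd (P @ [c]) = p" using P(1,2) by simp
    ultimately show ?thesis using P(4,5) False step.hyps(2) by (intro exI[of _ "P @ [c]"]) auto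
  qed
qed

lemma rotate_to_front:
  assumes "v \<in> set xs"
  obtains m R where "rotate m xs = v # R"
proof -
  obtain xs1 xs2 where "xs = xs1 @ v # xs2" using assms by (meson split_list)
  then have "rotate (length xs1) xs = v # xs2 @ xs1" by (simp add: rotate_append)
  then show ?thesis using that by blast
qed

lemma is_cycle_iff_successively:
  "is_cycle V E cs \<longleftrightarrow>
     3 \<le> length cs \<and> distinct cs \<and> set cs \<subseteq> V \<and> successively E cs \<and> E (last cs) (hd cs)"
proof -
  have "(\<forall>i < length cs. E (cs ! i) (cs ! ((i + 1) mod length cs))) \<longleftrightarrow>
        successively E cs \<and> E (last cs) (hd cs)" if "cs \<noteq> []"
  proof -
    have "(\<forall>i < length cs. E (cs ! i) (cs ! ((i + 1) mod length cs))) \<longleftrightarrow>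
      (\<forall>i. Suc i < length cs \<longrightarrow> E (cs ! i) (cs ! Suc i)) \<and> E (cs ! (length cs - 1)) (cs ! 0)"
      (is "?cyc \<longleftrightarrow> ?path \<and> ?close")
    proof
      assume ?cyc
      have "E (cs ! i) (cs ! Suc i)" if "Suc i < length cs" for i
        using \<open>?cyc\<close> that by (metis Suc_eq_plus1 Suc_lessD mod_less)
      then show "?path \<and> ?close"
        using spec[OF \<open>?cyc\<close>, of "length cs - 1"] that by auto
    next
      assume "?path \<and> ?close"
      then show ?cyc
        by (metis Suc_eq_plus1 Suc_lessI diff_Suc_1 mod_less mod_self)
    qed
    also have "\<dots> \<longleftrightarrow> successively E cs \<and> E (last cs) (hd cs)"
      using that by (simp add: successively_conv_nth hd_conv_nth last_conv_nth)
    finally show ?thesis .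
  qed
  then show ?thesis unfolding is_cycle_def by (cases "cs = []") auto
qed

lemma is_cycle_rotate1:
  assumes "is_cycle V E cs"
  shows "is_cycle V E (rotate1 cs)"
proof -
  obtain x xs where cs: "cs = x # xs" and "xs \<noteq> []"
    using assms unfolding is_cycle_iff_successively by (cases cs; cases "tl cs") auto
  have "successively E (x # xs)" "E (last xs) x"
    using assms \<open>xs \<noteq> []\<close> unfolding is_cycle_iff_successively cs by auto
  then have "successively E (xs @ [x])" "E x (hd xs)"
    using \<open>xs \<noteq> []\<close> by (auto simp: successively_append_iff successively_Cons)
  moreover have "3 \<le> length (xs @ [x])" "distinct (xs @ [x])" "set (xs @ [x]) \<subseteq> V"
    using assms unfolding is_cycle_iff_successively cs by auto
  ultimately show ?thesis
    using \<open>xs \<noteq> []\<close> unfolding is_cycle_iff_successively cs by simp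
qed

lemma is_cycle_rotate: "is_cycle V E cs \<Longrightarrow> is_cycle V E (rotate m cs)"
  by (induction m) (simp_all add: is_cycle_rotate1)

lemma is_cycle_rev:
  assumes "simple_graph V E" "is_cycle V E cs"
  shows "is_cycle V E (rev cs)"
  using assms by (auto simp del: successively_rev
      simp: is_cycle_iff_successively simple_graph_successively_rev hd_rev last_rev
      intro: simple_graph_sym)

lemma is_cycle_Cons_neighbours:
  assumes "is_cycle V E (v # R)"
  shows "E v (hd R)" "E (last R) v" "hd R \<noteq> last R" "hd R \<in> set R" "last R \<in> set R"
proof -
  have R: "2 \<le> length R" "distinct R" "successively E (v # R)" "E (last R) v"
    using assms unfolding is_cycle_iff_successively by (auto split: if_split_asm)
  then show "E v (hd R)" "E (last R) v" by (auto simp: successively_Cons)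
  show "hd R \<noteq> last R"
    using R(1,2) by (cases R; cases "tl R") (auto simp: hd_conv_nth last_conv_nth)
  show "hd R \<in> set R" "last R \<in> set R" using R(1) by (cases R; simp)+
qed

lemma is_cycle_neighbours:
  assumes "simple_graph V E" "is_cycle V E cs" "v \<in> set cs"
  obtains p q where "p \<noteq> q" "p \<in> set cs" "q \<in> set cs" "E v p" "E v q"
proof -
  obtain m R where rot: "rotate m cs = v # R" using rotate_to_front[OF assms(3)] .
  then have cyc: "is_cycle V E (v # R)" using is_cycle_rotate[OF assms(2), of m] by simp
  have "set R \<subseteq> set cs" using rot by (metis set_rotate set_subset_Cons)
  then show ?thesis
    using that is_cycle_Cons_neighbours[OF cyc] simple_graph_sym[OF assms(1)] by blast
qed

lemma is_cycle_closed_at_degree_two: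
  assumes "simple_graph V E" "is_cycle V E cs" "v \<in> set cs"
    and "\<And>y. E v y \<Longrightarrow> y = p \<or> y = q" and "E v y"
  shows "y \<in> set cs"
proof -
  obtain s t where "s \<noteq> t" "s \<in> set cs" "t \<in> set cs" "E v s" "E v t"
    using is_cycle_neighbours[OF assms(1-3)] .
  then show ?thesis using assms(4)[of s] assms(4)[of t] assms(4)[OF assms(5)] by auto
qed

lemma is_cycle_follows_path:
  assumes cyc: "is_cycle V E cs" and P: "distinct P" "2 \<le> length P"
    and start: "cs ! 0 = P ! 0" "cs ! 1 = P ! 1"
    and inner: "\<And>j y. 0 < j \<Longrightarrow> Suc j < length P \<Longrightarrow> E (P ! j) y \<Longrightarrow> y = P ! (j - 1) \<or> y = P ! Suc j"
  shows "length P \<le> length cs" "\<And>i. i < length P \<Longrightarrow> cs ! i = P ! i"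
proof -
  have cs: "3 \<le> length cs" "distinct cs" "successively E cs" "E (last cs) (hd cs)"
    using cyc unfolding is_cycle_iff_successively by auto
  have agree: "cs ! i = P ! i" if "i < length P" "i < length cs" for i
    using that
  proof (induction i rule: less_induct)
    case (less i)
    show ?case
    proof (cases "i \<le> 1")
      case True
      then show ?thesis using start by (cases i) auto
    next
      case False
      define k where "k = i - 2"
      then have i: "i = Suc (Suc k)" using False by simp
      have "E (P ! Suc k) (cs ! i)"
        using successively_nth[OF cs(3), of "Suc k"] less.IH[of "Suc k"] less.prems i by simp
      then have "cs ! i = P ! k \<or> cs ! i = P ! i" using inner[of "Suc k"] less.prems i by simp
      moreover have "cs ! i \<noteq> P ! k"
        using less.IH[of k] less.prems i nth_eq_iff_index_eq[OF cs(2), of i k] by simp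
      ultimately show ?thesis by simp
    qed
  qed
  show "length P \<le> length cs"
  proof (rule ccontr)
    assume short: "\<not> length P \<le> length cs"
    let ?l = "length cs - 1"
    have "cs \<noteq> []" using cs(1) by auto
    then have "E (cs ! ?l) (cs ! 0)" using cs(4) by (simp add: hd_conv_nth last_conv_nth)
    then have "E (P ! ?l) (P ! 0)" using agree[of ?l] start(1) short cs(1) by simp
    then have "P ! 0 = P ! (?l - 1) \<or> P ! 0 = P ! Suc ?l" using inner[of ?l] cs(1) short by simp
    moreover have "P ! 0 \<noteq> P ! j" if "0 < j" "j < length P" for j
      using nth_eq_iff_index_eq[OF P(1), of 0 j] that by fastforce
    ultimately show False using cs(1) short by auto
  qed
  then show "\<And>i. i < length P \<Longrightarrow> cs ! i = P ! i" using agree by simp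
qed

lemma two_paths_is_cycle:
  assumes "simple_graph V E" "successively E (x # A @ [y])" "successively E (x # B @ [y])"
    and "distinct (x # y # A @ B)" "set (x # y # A @ B) \<subseteq> V" "A \<noteq> [] \<or> B \<noteq> []"
  shows "is_cycle V E (x # A @ y # rev B)"
proof -
  have "successively E (y # rev B @ [x])" using successively_rev_path[OF assms(1,3)] .
  then have "successively E (x # A @ y # rev B @ [x])"
    using assms(2) successively_Cons_append_Cons by fastforce
  then have "successively E (x # A @ y # rev B)" "E (last (x # A @ y # rev B)) x"
    by (auto simp: successively_append_iff simp flip: append_Cons append_assoc)
  then show ?thesis using assms(4-6) unfolding is_cycle_iff_successively by (auto simp: Suc_le_eq)
qed

definition path_edge :: "'a list \<Rightarrow> 'a \<Rightarrow> 'a \<Rightarrow> bool" where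
  "path_edge P x y \<longleftrightarrow>
     (\<exists>i. Suc i < length P \<and> ((x = P ! i \<and> y = P ! Suc i) \<or> (y = P ! i \<and> x = P ! Suc i)))"

lemma path_edge_sym: "path_edge P x y \<Longrightarrow> path_edge P y x"
  unfolding path_edge_def by blast

lemma path_edge_nth: "Suc i < length P \<Longrightarrow> path_edge P (P ! i) (P ! Suc i)"
  unfolding path_edge_def by blast

lemma path_edge_middle: "path_edge (xs @ x # y # ys) x y"
  unfolding path_edge_def by (intro exI[of _ "length xs"]) (auto simp: nth_append)

lemma path_edge_rev: "path_edge (rev P) x y \<Longrightarrow> path_edge P x y"
proof -
  assume "path_edge (rev P) x y"
  then obtain i where i: "Suc i < length P"
    "(x = rev P ! i \<and> y = rev P ! Suc i) \<or> (y = rev P ! i \<and> x = rev P ! Suc i)"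
    unfolding path_edge_def by auto
  define j where "j = length P - Suc (Suc i)"
  have "rev P ! i = P ! Suc j" "rev P ! Suc i = P ! j" "Suc j < length P"
    using i(1) by (auto simp: rev_nth j_def Suc_diff_Suc)
  then show ?thesis using i(2) unfolding path_edge_def by blast
qed

definition cycle_edge :: "'a list \<Rightarrow> 'a \<Rightarrow> 'a \<Rightarrow> bool" where
  "cycle_edge C x y \<longleftrightarrow> (\<exists>i < length C.
     (x = C ! i \<and> y = C ! ((i + 1) mod length C)) \<or> (y = C ! i \<and> x = C ! ((i + 1) mod length C)))"

lemma cycle_edge_rotate: "cycle_edge (rotate m C) x y \<Longrightarrow> cycle_edge C x y"
proof -
  assume "cycle_edge (rotate m C) x y"
  then obtain i where i: "i < length C"
    "(x = rotate m C ! i \<and> y = rotate m C ! ((i + 1) mod length C)) \<or>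
     (y = rotate m C ! i \<and> x = rotate m C ! ((i + 1) mod length C))"
    unfolding cycle_edge_def by auto
  define j where "j = (m + i) mod length C"
  have "rotate m C ! i = C ! j" using i(1) by (simp add: nth_rotate j_def)
  moreover have "(i + 1) mod length C < length C" using i(1) by (cases C) auto
  then have "rotate m C ! ((i + 1) mod length C) = C ! ((m + (i + 1) mod length C) mod length C)"
    by (rule nth_rotate)
  moreover have "(m + (i + 1) mod length C) mod length C = (j + 1) mod length C"
    unfolding j_def by (metis mod_add_right_eq mod_add_left_eq add.assoc)
  ultimately have "(x = C ! j \<and> y = C ! ((j + 1) mod length C)) \<or>
    (y = C ! j \<and> x = C ! ((j + 1) mod length C))" using i(2) by simp
  moreover have "j < length C" using i(1) unfolding j_def by (cases C) auto
  ultimately show ?thesis unfolding cycle_edge_def by blast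
qed

lemma cycle_edge_Cons_Cons: "cycle_edge (x # y # B) x y"
  unfolding cycle_edge_def by (intro exI[of _ 0]) auto

lemma cycle_edge_Cons_snoc: "cycle_edge (x # A @ [y]) x y"
  unfolding cycle_edge_def by (intro exI[of _ "Suc (length A)"]) (auto simp: nth_append)

section \<open>Ears in 2-connected graphs\<close>

text \<open>S and F are the vertex set and the edge relation of the subgraph built so far.\<close>
definition ear ::
  "'a set \<Rightarrow> ('a \<Rightarrow> 'a \<Rightarrow> bool) \<Rightarrow> 'a set \<Rightarrow> ('a \<Rightarrow> 'a \<Rightarrow> bool) \<Rightarrow> 'a \<Rightarrow> 'a list \<Rightarrow> 'a \<Rightarrow> bool"
  where "ear V E S F x L y \<longleftrightarrow> x \<in> S \<and> y \<in> S \<and> x \<noteq> y \<and> successively E (x # L @ [y]) \<and>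
    distinct L \<and> set L \<subseteq> V \<and> set L \<inter> S = {} \<and> (L = [] \<longrightarrow> \<not> F x y)"

lemma ear_rev:
  assumes "simple_graph V E" "ear V E S F x L y" "\<And>x y. F x y \<Longrightarrow> F y x"
  shows "ear V E S F y (rev L) x"
  using assms successively_rev_path[OF assms(1)] unfolding ear_def by auto

lemma ear_mono:
  assumes "ear V E S F x L y" "S' \<subseteq> S" "x \<in> S'" "y \<in> S'" "\<And>x y. F' x y \<Longrightarrow> F x y"
  shows "ear V E S' F' x L y"
  using assms unfolding ear_def by blast

lemma two_connected_path_outside:
  assumes sg: "simple_graph V E" and tc: "two_connected V E" and SV: "S \<subseteq> V"
    and s: "s1 \<in> S" "s2 \<in> S" "s1 \<noteq> s2" and z: "z \<in> V" "z \<notin> S"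
  obtains x L y where "x \<in> S" "y \<in> S" "x \<noteq> y" "successively E (x # L @ [y])"
    "distinct L" "set L \<subseteq> V - S" "L \<noteq> []"
proof -
  define R where "R = (\<lambda>T a b. E a b \<and> a \<in> T \<and> b \<in> T)"
  define D where "D = {d. (R (V - S))\<^sup>*\<^sup>* z d}"
  have DVS: "D \<subseteq> V - S"
  proof
    fix d assume "d \<in> D"
    then have "(R (V - S))\<^sup>*\<^sup>* z d" unfolding D_def by simp
    then show "d \<in> V - S" using z unfolding R_def by (induction rule: rtranclp_induct) auto
  qed
  define N where "N = {s \<in> S. \<exists>d\<in>D. E d s}"
  text \<open>If at most one vertex c of S had a neighbour in D, deleting c would separate D from S.\<close>
  have "\<exists>x\<in>N. \<exists>y\<in>N. x \<noteq> y"
  proof (rule ccontr)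
    assume "\<not> (\<exists>x\<in>N. \<exists>y\<in>N. x \<noteq> y)"
    then obtain c where c: "c \<in> S" "N \<subseteq> {c}" using s(1) unfolding N_def by blast
    obtain s where s: "s \<in> S" "s \<noteq> c" using s by blast
    have "connected_on (V - {c}) E" using tc c(1) SV unfolding two_connected_def by blast
    then have reach: "(R (V - {c}))\<^sup>*\<^sup>* z s"
      unfolding connected_on_def R_def using z s SV c by blast
    have "b \<in> D" if "(R (V - {c}))\<^sup>*\<^sup>* z b" for b
      using that
    proof (induction rule: rtranclp_induct)
      case base
      then show ?case unfolding D_def by simp
    next
      case (step b b')
      then have b': "E b b'" "b' \<in> V - {c}" "b \<in> V - S" unfolding R_def using DVS by auto
      then have "b' \<notin> S" using step.IH c unfolding N_def by blast
      then have "R (V - S) b b'" unfolding R_def using b' by auto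
      then show ?case using step.IH unfolding D_def by auto
    qed
    from this[OF reach] show False using DVS s by blast
  qed
  then obtain x y d1 d2 where xy: "x \<in> S" "y \<in> S" "x \<noteq> y" "d1 \<in> D" "d2 \<in> D" "E d1 x" "E d2 y"
    unfolding N_def by blast
  have "symp (R (V - S))" unfolding R_def by (auto intro!: sympI simple_graph_sym[OF sg])
  then have "(R (V - S))\<^sup>*\<^sup>* d1 z"
    using xy(4) unfolding D_def by (auto dest: sympD[OF symp_rtranclp])
  then have "(R (V - S))\<^sup>*\<^sup>* d1 d2" using xy(5) unfolding D_def by auto
  then obtain L where L: "L \<noteq> []" "hd L = d1" "last L = d2" "distinct L" "set L \<subseteq> V - S"
    "successively E L"
    using rtranclp_within_imp_path[of E "V - S" d1 d2] xy(4) DVS unfolding R_def by blast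
  have "successively E (x # L @ [y])"
    using L(1,2,3,6) xy(6,7) simple_graph_sym[OF sg]
    by (auto simp: successively_append_iff successively_Cons)
  then show ?thesis using that xy(1-3) L(1,4,5) by blast
qed

lemma two_connected_ear:
  assumes sg: "simple_graph V E" and tc: "two_connected V E" and SV: "S \<subseteq> V"
    and s: "s1 \<in> S" "s2 \<in> S" "s1 \<noteq> s2"
    and incomplete: "\<not> (S = V \<and> (\<forall>x\<in>S. \<forall>y\<in>S. E x y \<longrightarrow> F x y))"
  obtains x L y where "ear V E S F x L y"
proof (cases "\<exists>x\<in>S. \<exists>y\<in>S. E x y \<and> \<not> F x y")
  case True
  then obtain x y where "x \<in> S" "y \<in> S" "E x y" "\<not> F x y" by blast
  then have "ear V E S F x [] y" unfolding ear_def using simple_graph_irrefl[OF sg] by auto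
  then show ?thesis using that by blast
next
  case False
  then obtain z where z: "z \<in> V" "z \<notin> S" using incomplete SV by blast
  obtain x L y where "x \<in> S" "y \<in> S" "x \<noteq> y" "successively E (x # L @ [y])" "distinct L"
    "set L \<subseteq> V - S" "L \<noteq> []"
    by (rule two_connected_path_outside[OF sg tc SV s z])
  then have "ear V E S F x L y" unfolding ear_def by auto
  then show ?thesis using that by blast
qed

lemma two_connected_has_cycle:
  assumes sg: "simple_graph V E" and tc: "two_connected V E"
  obtains cs where "is_cycle V E cs"
proof -
  have card: "card V > 2" and con: "connected_on V E" using tc unfolding two_connected_def by auto
  have "\<exists>v\<in>V. \<exists>v'\<in>V. v \<noteq> v'"
    using card card_le_Suc0_iff_eq[OF simple_graph_finite[OF sg]] by auto
  then obtain v v' where v: "v \<in> V" "v' \<in> V" "v \<noteq> v'" by blast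
  have "(\<lambda>a b. E a b \<and> a \<in> V \<and> b \<in> V)\<^sup>*\<^sup>* v v'" using con v unfolding connected_on_def by blast
  then obtain z where vz: "E v z" "z \<in> V"
    using v(3) by (cases rule: converse_rtranclpE) auto
  have "v \<noteq> z" using simple_graph_irrefl[OF sg vz(1)] .
  define F where "F = (\<lambda>a b. (a = v \<and> b = z) \<or> (a = z \<and> b = v))"
  have "{v, z} \<noteq> V" using card \<open>v \<noteq> z\<close> by auto
  then obtain x L y where ear: "ear V E {v, z} F x L y"
    using two_connected_ear[OF sg tc _ _ _ \<open>v \<noteq> z\<close>, of "{v, z}" F] v vz by auto
  then have "F x y" unfolding ear_def F_def by auto
  then have "L \<noteq> []" "E y x" using ear vz(1) simple_graph_sym[OF sg] unfolding ear_def F_def by auto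
  then have "is_cycle V E (x # L @ [y])"
    using ear v vz unfolding is_cycle_iff_successively ear_def by (auto simp: Suc_le_eq)
  then show ?thesis using that by blast
qed

section \<open>Theta subgraphs\<close>

text \<open>The lists in As are the interiors of the paths u A w.\<close>
definition theta_subgraph ::
  "'a set \<Rightarrow> ('a \<Rightarrow> 'a \<Rightarrow> bool) \<Rightarrow> 'a \<Rightarrow> 'a \<Rightarrow> nat \<Rightarrow> 'a list list \<Rightarrow> bool" where
  "theta_subgraph V E u w a As \<longleftrightarrow> 3 \<le> length As \<and> distinct As \<and> distinct (u # w # concat As) \<and>
     set (u # w # concat As) \<subseteq> V \<and> (\<forall>A\<in>set As. length A + 1 = a \<and> successively E (u # A @ [w]))"

definition theta_vertices :: "'a \<Rightarrow> 'a \<Rightarrow> 'a list list \<Rightarrow> 'a set" where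
  "theta_vertices u w As = set (u # w # concat As)"

definition theta_edge :: "'a \<Rightarrow> 'a \<Rightarrow> 'a list list \<Rightarrow> 'a \<Rightarrow> 'a \<Rightarrow> bool" where
  "theta_edge u w As x y \<longleftrightarrow> (\<exists>A\<in>set As. path_edge (u # A @ [w]) x y)"

lemma theta_edge_sym: "theta_edge u w As x y \<Longrightarrow> theta_edge u w As y x"
  unfolding theta_edge_def by (metis path_edge_sym)

lemma obtain_third_member:
  assumes "distinct As" "3 \<le> length As" "A \<in> set As" "B \<in> set As"
  obtains C where "C \<in> set As" "C \<noteq> A" "C \<noteq> B"
proof -
  have "card {A, B} \<le> 2" by (simp add: card_insert_if)
  then have "card {A, B} < card (set As)" using assms(1,2) distinct_card[of As] by simp
  then have "\<not> set As \<subseteq> {A, B}" by (metis card_mono finite.emptyI finite.insertI not_le)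
  then show ?thesis using that by blast
qed

lemma distinct_concatD:
  assumes "distinct (concat As)" "A \<in> set As"
  shows "distinct A" "B \<in> set As \<Longrightarrow> A \<noteq> B \<Longrightarrow> set A \<inter> set B = {}"
  using assms unfolding distinct_concat_iff by auto

lemma distinct_concat_two:
  assumes "distinct (u # w # concat As)" "A \<in> set As" "B \<in> set As" "A \<noteq> B"
  shows "distinct (u # w # A @ B)"
proof -
  have "distinct (concat As)" using assms(1) by simp
  then show ?thesis using assms distinct_concatD[of As] by auto
qed

lemma distinct_concat_three:
  assumes "distinct (u # w # concat As)" "Ai \<in> set As" "Aj \<in> set As" "Al \<in> set As"
    "Ai \<noteq> Aj" "Ai \<noteq> Al" "Aj \<noteq> Al"
  shows "distinct (u # w # Ai @ Aj @ Al)"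
proof -
  have "distinct (concat As)" using assms(1) by simp
  then show ?thesis using assms distinct_concatD[of As] by auto
qed

lemma theta_subgraph_nonempty:
  assumes "theta_subgraph V E u w a As" "A \<in> set As"
  shows "A \<noteq> []"
proof
  assume "A = []"
  obtain B where "B \<in> set As" "B \<noteq> A"
    using assms obtain_third_member[of As A A] unfolding theta_subgraph_def by blast
  then have "length B = length A"
    using assms unfolding theta_subgraph_def by (metis add_right_cancel)
  then show False using \<open>A = []\<close> \<open>B \<noteq> A\<close> by simp
qed

lemma theta_spanning_is_uniform_theta:
  assumes sg: "simple_graph V E" and th: "theta_subgraph V E u w a As"
    and spanning: "theta_vertices u w As = V" and edges: "\<And>x y. E x y \<Longrightarrow> theta_edge u w As x y"
  shows "is_uniform_theta V E"
proof -
  have As: "3 \<le> length As" "distinct As" "distinct (u # w # concat As)"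
    "\<forall>A\<in>set As. length A + 1 = a \<and> successively E (u # A @ [w])"
    using th unfolding theta_subgraph_def by auto
  have disj: "distinct A" "B \<in> set As \<Longrightarrow> A \<noteq> B \<Longrightarrow> set A \<inter> set B = {}" if "A \<in> set As" for A B
    using distinct_concatD[OF _ that] As(3) by auto
  have uw: "u \<notin> set A" "w \<notin> set A" if "A \<in> set As" for A using As(3) that by auto
  define Ps where "Ps = map (\<lambda>A. u # A @ [w]) As"
  have "Ps \<noteq> []" "distinct Ps"
    using As(1,2) unfolding Ps_def by (auto simp: distinct_map inj_on_def)
  moreover have "\<forall>P\<in>set Ps. length P = a + 1 \<and> distinct P \<and> hd P = u \<and> last P = w"
    unfolding Ps_def using As(3,4) disj(1) uw by auto
  moreover have "set (Ps ! i) \<inter> set (Ps ! j) = {u, w}"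
    if "i < length Ps" "j < length Ps" "i \<noteq> j" for i j
  proof -
    have "As ! i \<in> set As" "As ! j \<in> set As" "As ! i \<noteq> As ! j"
      using that As(2) unfolding Ps_def by (auto simp: nth_eq_iff_index_eq)
    then show ?thesis using that disj(2) uw unfolding Ps_def by auto
  qed
  moreover have "V = (\<Union>P\<in>set Ps. set P)"
    using spanning As(1) unfolding theta_vertices_def Ps_def by (cases As) auto
  moreover have "E x y \<longleftrightarrow> (\<exists>P\<in>set Ps. path_edge P x y)" for x y
  proof
    assume "E x y"
    then show "\<exists>P\<in>set Ps. path_edge P x y" using edges unfolding theta_edge_def Ps_def by auto
  next
    assume "\<exists>P\<in>set Ps. path_edge P x y"
    then obtain A i where "A \<in> set As" "Suc i < length (u # A @ [w])"
      "(x = (u # A @ [w]) ! i \<and> y = (u # A @ [w]) ! Suc i) \<or>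
       (y = (u # A @ [w]) ! i \<and> x = (u # A @ [w]) ! Suc i)"
      unfolding Ps_def path_edge_def by auto
    then show "E x y" using As(4) successively_nth simple_graph_sym[OF sg] by metis
  qed
  moreover have "u \<noteq> w" using As(3) by simp
  moreover have "1 \<le> a" using As(1,4) by (cases As) auto
  ultimately show ?thesis unfolding is_uniform_theta_def path_edge_def[symmetric] by blast
qed

section \<open>Graphs whose cycles all have the same length\<close>

locale equicyclic_graph =
  fixes V :: "'a set" and E :: "'a \<Rightarrow> 'a \<Rightarrow> bool" and n :: nat
  assumes simple: "simple_graph V E"
    and cycle_length: "is_cycle V E cs \<Longrightarrow> length cs = n"
begin

lemma two_paths_length:
  assumes "successively E (x # A @ [y])" "successively E (x # B @ [y])"
    and "distinct (x # y # A @ B)" "set (x # y # A @ B) \<subseteq> V" "A \<noteq> [] \<or> B \<noteq> []"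
  shows "length A + length B + 2 = n"
  using cycle_length[OF two_paths_is_cycle[OF simple assms]] by simp

lemma three_paths_length:
  assumes "successively E (x # A @ [y])" "successively E (x # B @ [y])"
    "successively E (x # C @ [y])"
    and "distinct (x # y # A @ B @ C)" "set (x # y # A @ B @ C) \<subseteq> V"
    and "A \<noteq> [] \<or> B \<noteq> []" "A \<noteq> [] \<or> C \<noteq> []" "B \<noteq> [] \<or> C \<noteq> []"
  shows "length A = length B" "length B = length C"
proof -
  have "length A + length B + 2 = n" by (rule two_paths_length) (use assms in auto)
  moreover have "length A + length C + 2 = n" by (rule two_paths_length) (use assms in auto)
  moreover have "length B + length C + 2 = n" by (rule two_paths_length) (use assms in auto)
  ultimately show "length A = length B" "length B = length C" by simp_all
qed

end

text \<open>Each ear leaving the interior of u Ai w yields three internally disjoint paths of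
  different lengths between two vertices, contradicting three_paths_length.\<close>
locale equicyclic_theta3 = equicyclic_graph +
  fixes u w :: 'a and Ai Aj Al :: "'a list"
  assumes distinct: "distinct (u # w # Ai @ Aj @ Al)"
    and same_length: "length Aj = length Ai" "length Al = length Ai"
    and paths: "successively E (u # Ai @ [w])" "successively E (u # Aj @ [w])"
      "successively E (u # Al @ [w])"
    and in_V: "set (u # w # Ai @ Aj @ Al) \<subseteq> V"
begin

lemma split_Ai:
  assumes "Ai = A1 @ x # A2"
  shows "successively E (u # A1 @ [x])" "successively E (x # A2 @ [w])"
  using paths(1) successively_Cons_append_Cons[of E u A1 x "A2 @ [w]"] assms by simp_all

lemma no_ear_to_u:
  assumes x: "x \<in> set Ai"
    and ear: "ear V E (set (u # w # Ai @ Aj @ Al)) (path_edge (u # Ai @ [w])) x L u"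
  shows False
proof -
  obtain A1 A2 where Ai: "Ai = A1 @ x # A2" using x by (meson split_list)
  have L: "successively E (x # L @ [u])" "distinct L" "set L \<subseteq> V"
    "set L \<inter> set (u # w # Ai @ Aj @ Al) = {}" "L = [] \<longrightarrow> \<not> path_edge (u # Ai @ [w]) x u"
    using ear unfolding ear_def by auto
  have P1: "successively E (x # rev A1 @ [u])"
    using successively_rev_path[OF simple split_Ai(1)[OF Ai]] .
  have P3: "successively E (x # (A2 @ w # rev Aj) @ [u])"
    using split_Ai(2)[OF Ai] successively_rev_path[OF simple paths(2)]
      successively_Cons_append_Cons[of E x A2 w "rev Aj @ [u]"] by simp
  have "rev A1 \<noteq> [] \<or> L \<noteq> []"
    using L(5) path_edge_middle[of "[]" u x "A2 @ [w]"] unfolding Ai by (auto dest: path_edge_sym)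
  moreover have "distinct (x # u # rev A1 @ L @ A2 @ w # rev Aj)"
    using L(2,4) distinct unfolding Ai by auto
  moreover have "set (x # u # rev A1 @ L @ A2 @ w # rev Aj) \<subseteq> V"
    using L(3) in_V unfolding Ai by auto
  ultimately have "length (rev A1) = length L" "length L = length (A2 @ w # rev Aj)"
    using three_paths_length[OF P1 L(1) P3] by simp_all
  then show False using same_length unfolding Ai by simp
qed

lemma no_ear_along:
  assumes Ai: "Ai = A1 @ x # M @ y # A3"
    and ear: "ear V E (set (u # w # Ai @ Aj @ Al)) (path_edge (u # Ai @ [w])) x L y"
  shows False
proof -
  have L: "successively E (x # L @ [y])" "distinct L" "set L \<subseteq> V"
    "set L \<inter> set (u # w # Ai @ Aj @ Al) = {}" "L = [] \<longrightarrow> \<not> path_edge (u # Ai @ [w]) x y"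
    using ear unfolding ear_def by auto
  have split: "successively E (x # M @ [y])" "successively E (y # A3 @ [w])"
    using split_Ai(2)[of A1 x "M @ y # A3"] successively_Cons_append_Cons[of E x M y "A3 @ [w]"] Ai
    by simp_all
  have "successively E (u # Aj @ w # rev A3 @ [y])"
    using paths(2) successively_rev_path[OF simple split(2)] successively_Cons_append_Cons
    by fastforce
  then have P3: "successively E (x # (rev A1 @ u # Aj @ w # rev A3) @ [y])"
    using successively_rev_path[OF simple split_Ai(1)[of A1 x "M @ y # A3"]] Ai
      successively_Cons_append_Cons[of E x "rev A1" u "Aj @ w # rev A3 @ [y]"] by simp
  have "M \<noteq> [] \<or> L \<noteq> []"
    using L(5) path_edge_middle[of "u # A1" x y "A3 @ [w]"] unfolding Ai by auto
  moreover have "distinct (x # y # M @ L @ rev A1 @ u # Aj @ w # rev A3)"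
    using L(2,4) distinct unfolding Ai by auto
  moreover have "set (x # y # M @ L @ rev A1 @ u # Aj @ w # rev A3) \<subseteq> V"
    using L(3) in_V unfolding Ai by auto
  ultimately have "length M = length L" "length L = length (rev A1 @ u # Aj @ w # rev A3)"
    using three_paths_length[OF split(1) L(1) P3] by simp_all
  then show False using same_length unfolding Ai by simp
qed

lemma no_ear_across:
  assumes x: "x \<in> set Ai" and y: "y \<in> set Aj"
    and ear: "ear V E (set (u # w # Ai @ Aj @ Al)) (path_edge (u # Ai @ [w])) x L y"
  shows False
proof -
  obtain A1 A2 where Ai: "Ai = A1 @ x # A2" using x by (meson split_list)
  obtain B1 B2 where Aj: "Aj = B1 @ y # B2" using y by (meson split_list)
  have L: "successively E (x # L @ [y])" "distinct L" "set L \<subseteq> V"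
    "set L \<inter> set (u # w # Ai @ Aj @ Al) = {}"
    using ear unfolding ear_def by auto
  have B: "successively E (u # B1 @ [y])" "successively E (y # B2 @ [w])"
    using paths(2) successively_Cons_append_Cons[of E u B1 y "B2 @ [w]"] Aj by simp_all
  have P2: "successively E (u # (A1 @ x # L) @ [y])"
    using split_Ai(1)[OF Ai] L(1) successively_Cons_append_Cons[of E u A1 x "L @ [y]"] by simp
  have P3: "successively E (u # (Al @ w # rev B2) @ [y])"
    using paths(3) successively_rev_path[OF simple B(2)]
      successively_Cons_append_Cons[of E u Al w "rev B2 @ [y]"] by simp
  have "distinct (u # y # B1 @ (A1 @ x # L) @ Al @ w # rev B2)"
    using L(2,4) distinct unfolding Ai Aj by auto
  moreover have "set (u # y # B1 @ (A1 @ x # L) @ Al @ w # rev B2) \<subseteq> V"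
    using L(3) in_V unfolding Ai Aj by auto
  ultimately have "length B1 = length (A1 @ x # L)" "length (A1 @ x # L) = length (Al @ w # rev B2)"
    using three_paths_length[OF B(1) P2 P3] by simp_all
  then show False using same_length unfolding Aj by simp
qed

lemma swap_ends: "equicyclic_theta3 V E n w u (rev Ai) (rev Aj) (rev Al)"
proof unfold_locales
  show "successively E (w # rev Ai @ [u])" "successively E (w # rev Aj @ [u])"
    "successively E (w # rev Al @ [u])"
    using successively_rev_path[OF simple] paths by auto
qed (use distinct same_length in_V in auto)

lemma no_ear_to_w:
  assumes x: "x \<in> set Ai"
    and ear: "ear V E (set (u # w # Ai @ Aj @ Al)) (path_edge (u # Ai @ [w])) x L w"
  shows False
proof -
  interpret rev: equicyclic_theta3 V E n w u "rev Ai" "rev Aj" "rev Al" by (rule swap_ends)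
  have "ear V E (set (w # u # rev Ai @ rev Aj @ rev Al)) (path_edge (w # rev Ai @ [u])) x L w"
    using ear by (rule ear_mono) (use x in \<open>auto intro: path_edge_rev\<close>)
  then show False using rev.no_ear_to_u x by simp
qed

lemma no_ear_from_Ai:
  assumes x: "x \<in> set Ai" and y: "y \<in> {u, w} \<union> set Ai \<union> set Aj"
    and ear: "ear V E (set (u # w # Ai @ Aj @ Al)) (path_edge (u # Ai @ [w])) x L y"
  shows False
proof -
  consider "y = u" | "y = w" | "y \<in> set Ai" | "y \<in> set Aj" using y by blast
  then show False
  proof cases
    case 3
    obtain A1 A2 where Ai: "Ai = A1 @ x # A2" using x by (meson split_list)
    have "x \<noteq> y" using ear unfolding ear_def by blast
    then have "y \<in> set A1 \<or> y \<in> set A2" using 3 unfolding Ai by auto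
    then show False
    proof
      assume "y \<in> set A2"
      then obtain M A3 where "A2 = M @ y # A3" by (meson split_list)
      then show False using no_ear_along[of A1 x M y A3 L] ear Ai by simp
    next
      assume "y \<in> set A1"
      then obtain A0 M where "A1 = A0 @ y # M" by (meson split_list)
      then show False
        using no_ear_along[of A0 y M x A2 "rev L"] ear_rev[OF simple ear path_edge_sym] Ai by simp
    qed
  qed (use ear no_ear_to_u no_ear_to_w no_ear_across x in blast)+
qed

end

context equicyclic_graph
begin

lemma theta_ear_not_from_interior:
  assumes th: "theta_subgraph V E u w a As"
    and ear: "ear V E (theta_vertices u w As) (theta_edge u w As) x L y"
  shows "x \<notin> set (concat As)"
proof
  assume "x \<in> set (concat As)"
  then obtain Ai where Ai: "Ai \<in> set As" "x \<in> set Ai" by auto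
  have As: "distinct As" "3 \<le> length As" using th unfolding theta_subgraph_def by auto
  obtain Aj Al where J: "Aj \<in> set As" "Al \<in> set As" "Ai \<noteq> Aj" "Ai \<noteq> Al" "Aj \<noteq> Al"
    and y: "y \<in> {u, w} \<union> set Ai \<union> set Aj"
  proof (cases "\<exists>Aj\<in>set As. Aj \<noteq> Ai \<and> y \<in> set Aj")
    case True
    then obtain Aj where "Aj \<in> set As" "Aj \<noteq> Ai" "y \<in> set Aj" by blast
    moreover obtain Al where "Al \<in> set As" "Al \<noteq> Ai" "Al \<noteq> Aj"
      using obtain_third_member[OF As Ai(1) \<open>Aj \<in> set As\<close>] by blast
    ultimately show ?thesis using that by auto
  next
    case False
    obtain Aj where Aj: "Aj \<in> set As" "Aj \<noteq> Ai"
      using obtain_third_member[OF As Ai(1) Ai(1)] by blast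
    obtain Al where "Al \<in> set As" "Al \<noteq> Ai" "Al \<noteq> Aj"
      using obtain_third_member[OF As Ai(1) Aj(1)] by blast
    moreover have "y \<in> {u, w} \<union> set Ai"
      using ear False unfolding ear_def theta_vertices_def by auto
    ultimately show ?thesis using that Aj by auto
  qed
  have As_paths: "length A + 1 = a" "successively E (u # A @ [w])" if "A \<in> set As" for A
    using th that unfolding theta_subgraph_def by auto
  then have "length Aj = length Ai" "length Al = length Ai"
    using Ai(1) J(1,2) by (metis add_right_cancel)+
  moreover have "distinct (u # w # Ai @ Aj @ Al)"
    using distinct_concat_three[OF _ Ai(1) J] th unfolding theta_subgraph_def by blast
  ultimately interpret equicyclic_theta3 V E n u w Ai Aj Al
    using th Ai(1) J As_paths(2) by unfold_locales (auto simp: theta_subgraph_def)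
  have "ear V E (set (u # w # Ai @ Aj @ Al)) (path_edge (u # Ai @ [w])) x L y"
    using ear by (rule ear_mono) (use Ai y J in \<open>auto simp: theta_vertices_def theta_edge_def\<close>)
  then show False using no_ear_from_Ai[OF Ai(2) y] by blast
qed

lemma theta_ear_ends:
  assumes th: "theta_subgraph V E u w a As"
    and ear: "ear V E (theta_vertices u w As) (theta_edge u w As) x L y"
  shows "(x = u \<and> y = w) \<or> (x = w \<and> y = u)"
proof -
  have "x \<notin> set (concat As)" using theta_ear_not_from_interior[OF th ear] .
  moreover have "y \<notin> set (concat As)"
    using theta_ear_not_from_interior[OF th ear_rev[OF simple ear theta_edge_sym]] .
  ultimately show ?thesis using ear unfolding ear_def theta_vertices_def by auto
qed

lemma theta_extend:
  assumes th: "theta_subgraph V E u w a As"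
    and ear: "ear V E (theta_vertices u w As) (theta_edge u w As) u L w"
  shows "theta_subgraph V E u w a (L # As)"
proof -
  have L: "successively E (u # L @ [w])" "distinct L" "set L \<subseteq> V"
    "set L \<inter> set (u # w # concat As) = {}"
    using ear unfolding ear_def theta_vertices_def by auto
  have As: "distinct As" "3 \<le> length As" "distinct (u # w # concat As)"
    "set (u # w # concat As) \<subseteq> V"
    "\<forall>A\<in>set As. length A + 1 = a \<and> successively E (u # A @ [w])"
    using th unfolding theta_subgraph_def by auto
  obtain A where A: "A \<in> set As" using As(2) by (cases As) auto
  obtain B where B: "B \<in> set As" "B \<noteq> A" using obtain_third_member[OF As(1,2) A A] by blast
  have "length A + length L + 2 = n"
    by (rule two_paths_length)
      (use A L As(3,4,5) theta_subgraph_nonempty[OF th A] in \<open>auto simp: distinct_concat_iff\<close>)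
  moreover have "length A + length B + 2 = n"
  proof (rule two_paths_length)
    show "distinct (u # w # A @ B)" using distinct_concat_two[OF As(3) A B(1)] B(2) by simp
  qed (use A B As(4,5) theta_subgraph_nonempty[OF th A] in auto)
  moreover have "length A + 1 = a" "length B + 1 = a" using A B(1) As(5) by auto
  ultimately have len: "length L + 1 = a" by simp
  then have "L \<noteq> []" using \<open>length A + 1 = a\<close> theta_subgraph_nonempty[OF th A] by auto
  have "L \<notin> set As"
  proof
    assume "L \<in> set As"
    then have "set L \<subseteq> set (u # w # concat As)" by auto
    then show False using L(4) \<open>L \<noteq> []\<close> Int_absorb2 by fastforce
  qed
  then show ?thesis using As L len unfolding theta_subgraph_def by auto
qed

lemma theta_grows_to_uniform_theta:
  assumes tc: "two_connected V E" and th: "theta_subgraph V E u w a As"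
  shows "is_uniform_theta V E"
  using th
proof (induction "card V - card (theta_vertices u w As)" arbitrary: As rule: less_induct)
  case less
  have sub: "theta_vertices u w As \<subseteq> V" and uw: "u \<noteq> w"
    using less.prems unfolding theta_subgraph_def theta_vertices_def by auto
  have u: "u \<in> theta_vertices u w As" "w \<in> theta_vertices u w As"
    unfolding theta_vertices_def by auto
  show ?case
  proof (cases "\<exists>x L y. ear V E (theta_vertices u w As) (theta_edge u w As) x L y")
    case False
    then have "theta_vertices u w As = V \<and> (\<forall>x\<in>V. \<forall>y\<in>V. E x y \<longrightarrow> theta_edge u w As x y)"
      using two_connected_ear[OF simple tc sub u uw] by metis
    then show ?thesis
      using theta_spanning_is_uniform_theta[OF simple less.prems] simple_graph_edge_in_V[OF simple]
      by blast
  next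
    case True
    then obtain x L y where ear: "ear V E (theta_vertices u w As) (theta_edge u w As) x L y"
      by blast
    obtain L' where ear': "ear V E (theta_vertices u w As) (theta_edge u w As) u L' w"
      using theta_ear_ends[OF less.prems ear] ear ear_rev[OF simple ear theta_edge_sym] by blast
    have th': "theta_subgraph V E u w a (L' # As)" using theta_extend[OF less.prems ear'] .
    have grow: "theta_vertices u w (L' # As) = theta_vertices u w As \<union> set L'"
      unfolding theta_vertices_def by auto
    have "L' \<noteq> []" "set L' \<inter> theta_vertices u w As = {}" "set L' \<subseteq> V"
      using theta_subgraph_nonempty[OF th'] ear' unfolding ear_def by auto
    moreover have "finite V" using simple_graph_finite[OF simple] .
    moreover have "finite (theta_vertices u w As)" unfolding theta_vertices_def by simp
    ultimately have "card (theta_vertices u w As) < card (theta_vertices u w (L' # As))"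
      "card (theta_vertices u w (L' # As)) \<le> card V"
      using sub unfolding grow
      by (simp add: card_Un_disjoint Int_commute card_gt_0_iff, simp add: card_mono)
    then show ?thesis using less.hyps[OF _ th'] by simp
  qed
qed

lemma cycle_ear_theta:
  assumes C: "is_cycle V E C" and ear: "ear V E (set C) (cycle_edge C) x L y"
  obtains a As where "theta_subgraph V E x y a As"
proof -
  have L: "successively E (x # L @ [y])" "distinct L" "set L \<subseteq> V" "set L \<inter> set C = {}"
    "L = [] \<longrightarrow> \<not> cycle_edge C x y" "x \<in> set C" "y \<in> set C" "x \<noteq> y"
    using ear unfolding ear_def by auto
  obtain m R where rot: "rotate m C = x # R" using rotate_to_front[OF L(6)] .
  then have "y \<in> set R" using L(7,8) by (metis set_ConsD set_rotate)
  then obtain A B where R: "R = A @ y # B" by (meson split_list)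
  have C': "is_cycle V E (x # A @ y # B)" using is_cycle_rotate[OF C, of m] rot R by simp
  have setC: "set (x # A @ y # B) = set C" using rot R by (metis set_rotate)
  have C'p: "3 \<le> length (x # A @ y # B)" "distinct (x # A @ y # B)" "set (x # A @ y # B) \<subseteq> V"
    "successively E (x # A @ y # B)" "E (last (y # B)) x"
    using C' unfolding is_cycle_iff_successively by auto
  have PA: "successively E (x # A @ [y])"
    using C'p(4) successively_Cons_append_Cons by fastforce
  have "successively E (y # B @ [x])"
    using C'p(4,5) successively_Cons_append_Cons[of E x A y B]
    by (auto simp: successively_append_iff simp flip: append_Cons)
  then have PB: "successively E (x # rev B @ [y])" using successively_rev_path[OF simple] by blast
  have AL: "A \<noteq> [] \<or> L \<noteq> []"
    using L(5) cycle_edge_rotate[of m C x y] cycle_edge_Cons_Cons[of x y B] rot R by auto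
  have BL: "rev B \<noteq> [] \<or> L \<noteq> []"
    using L(5) cycle_edge_rotate[of m C x y] cycle_edge_Cons_snoc[of x A y] rot R by auto
  have AB: "A \<noteq> [] \<or> rev B \<noteq> []" using C'p(1) by auto
  have d: "distinct (x # y # A @ rev B @ L)" using C'p(2) L(2,4) setC by auto
  have s: "set (x # y # A @ rev B @ L) \<subseteq> V" using C'p(3) L(3) by auto
  have len: "length A = length (rev B)" "length (rev B) = length L"
    using three_paths_length[OF PA PB L(1) d s AB AL BL] by simp_all
  then have "A \<noteq> []" "rev B \<noteq> []" using AB by auto
  moreover have "set A \<inter> set (rev B) = {}" "set A \<inter> set L = {}" "set (rev B) \<inter> set L = {}"
    using d by auto
  ultimately have "distinct [A, rev B, L]" by fastforce
  then show ?thesis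
    using that[of "length L + 1" "[A, rev B, L]"] PA PB L(1) len d s
    unfolding theta_subgraph_def by auto
qed

lemma cycle_graph_or_uniform_theta:
  assumes tc: "two_connected V E"
  shows "is_cycle_graph V E \<or> is_uniform_theta V E"
proof -
  obtain C where C: "is_cycle V E C" using two_connected_has_cycle[OF simple tc] .
  have Cp: "3 \<le> length C" "distinct C" "set C \<subseteq> V"
    "\<forall>i < length C. E (C ! i) (C ! ((i + 1) mod length C))"
    using C unfolding is_cycle_def by auto
  show ?thesis
  proof (cases "\<exists>x L y. ear V E (set C) (cycle_edge C) x L y")
    case True
    then obtain x L y where "ear V E (set C) (cycle_edge C) x L y" by blast
    then obtain a As where "theta_subgraph V E x y a As" using cycle_ear_theta[OF C] by blast
    then show ?thesis using theta_grows_to_uniform_theta[OF tc] by blast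
  next
    case False
    obtain c0 c1 C' where "C = c0 # c1 # C'" using Cp(1) by (cases C; cases "tl C") auto
    then have "c0 \<in> set C" "c1 \<in> set C" "c0 \<noteq> c1" using Cp(2) by auto
    then have spanning: "set C = V \<and> (\<forall>x\<in>set C. \<forall>y\<in>set C. E x y \<longrightarrow> cycle_edge C x y)"
      using two_connected_ear[OF simple tc Cp(3)] False by metis
    have "E x y \<longleftrightarrow> cycle_edge C x y" for x y
    proof
      assume "E x y"
      then show "cycle_edge C x y" using spanning simple_graph_edge_in_V[OF simple] by blast
    next
      assume "cycle_edge C x y"
      then show "E x y" using Cp(4) simple_graph_sym[OF simple] unfolding cycle_edge_def by blast
    qed
    then show ?thesis
      using Cp(1,2) spanning unfolding is_cycle_graph_def cycle_edge_def by blast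
  qed
qed

end

section \<open>Cycle graphs and uniform theta graphs\<close>

lemma cycle_graph_degree_le_two:
  assumes "is_cycle_graph V E" "v \<in> V"
  obtains p q where "\<And>y. E v y \<Longrightarrow> y = p \<or> y = q"
proof -
  obtain xs where xs: "distinct xs" "set xs = V"
    "\<And>x y. E x y \<longleftrightarrow> (\<exists>i < length xs. (x = xs ! i \<and> y = xs ! ((i + 1) mod length xs)) \<or>
        (y = xs ! i \<and> x = xs ! ((i + 1) mod length xs)))"
    using assms(1) unfolding is_cycle_graph_def by blast
  let ?N = "length xs"
  obtain k where k: "k < ?N" "xs ! k = v" using assms(2) xs(2) by (auto simp: in_set_conv_nth)
  have "y = xs ! ((k + 1) mod ?N) \<or> y = xs ! ((k + ?N - 1) mod ?N)" if "E v y" for y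
  proof -
    obtain i where i: "i < ?N"
      "(v = xs ! i \<and> y = xs ! ((i + 1) mod ?N)) \<or> (y = xs ! i \<and> v = xs ! ((i + 1) mod ?N))"
      using xs(3) \<open>E v y\<close> by blast
    have "(i + 1) mod ?N < ?N" using i(1) by (cases xs) auto
    then have "i = k \<or> (i + 1) mod ?N = k"
      using i k nth_eq_iff_index_eq[OF xs(1)] by metis
    moreover have "i = (k + ?N - 1) mod ?N" if "(i + 1) mod ?N = k"
      using i(1) that by (cases "Suc i = ?N") auto
    ultimately show ?thesis using i(2) k(2) by auto
  qed
  then show ?thesis using that by blast
qed

lemma max_degree_two_cycle_spans:
  assumes sg: "simple_graph V E" and con: "connected_on V E"
    and deg: "\<And>v. v \<in> V \<Longrightarrow> \<exists>p q. \<forall>y. E v y \<longrightarrow> y = p \<or> y = q" and C: "is_cycle V E cs"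
  shows "set cs = V"
proof -
  have cs: "3 \<le> length cs" "set cs \<subseteq> V" using C unfolding is_cycle_def by auto
  then obtain c where c: "c \<in> set cs" by (cases cs) auto
  have "y \<in> set cs" if "y \<in> V" for y
  proof -
    have "(\<lambda>a b. E a b \<and> a \<in> V \<and> b \<in> V)\<^sup>*\<^sup>* c y"
      using con c cs(2) that unfolding connected_on_def by blast
    then show ?thesis
    proof (induction rule: rtranclp_induct)
      case (step b b')
      obtain p q where "\<forall>y. E b y \<longrightarrow> y = p \<or> y = q" using deg step.hyps(2) by blast
      then show ?case using is_cycle_closed_at_degree_two[OF sg C step.IH] step.hyps(2) by blast
    qed (use c in simp)
  qed
  then show ?thesis using cs(2) by blast
qed

lemma cycle_graph_equicyclic:
  assumes sg: "simple_graph V E" and tc: "two_connected V E" and cg: "is_cycle_graph V E"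
  shows "equicyclic_graph V E (card V)"
proof
  fix cs assume C: "is_cycle V E cs"
  have "connected_on V E" using tc unfolding two_connected_def by blast
  then have "set cs = V"
    using max_degree_two_cycle_spans[OF sg _ _ C] cycle_graph_degree_le_two[OF cg] by metis
  then show "length cs = card V" using C distinct_card unfolding is_cycle_def by metis
qed (rule sg)

locale uniform_theta =
  fixes V :: "'a set" and E :: "'a \<Rightarrow> 'a \<Rightarrow> bool" and u w :: 'a and a :: nat and Ps :: "'a list list"
  assumes length_pos: "1 \<le> a"
    and paths: "\<And>P. P \<in> set Ps \<Longrightarrow> length P = a + 1 \<and> distinct P \<and> hd P = u \<and> last P = w"
    and internally_disjoint:
      "\<And>i j. i < length Ps \<Longrightarrow> j < length Ps \<Longrightarrow> i \<noteq> j \<Longrightarrow> set (Ps ! i) \<inter> set (Ps ! j) = {u, w}"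
    and vertices: "V = (\<Union>P\<in>set Ps. set P)"
    and edges: "\<And>x y. E x y \<longleftrightarrow> (\<exists>P\<in>set Ps. path_edge P x y)"
begin

lemma path_ends: "P \<in> set Ps \<Longrightarrow> P ! 0 = u \<and> P ! a = w"
  using paths[of P] by (cases P) (auto simp: last_conv_nth)

lemma consecutive_adjacent:
  assumes "P \<in> set Ps" "Suc i \<le> a"
  shows "E (P ! i) (P ! Suc i)" "E (P ! Suc i) (P ! i)"
proof -
  have e: "path_edge P (P ! i) (P ! Suc i)"
    using paths[OF assms(1)] assms(2) by (intro path_edge_nth) simp
  then show "E (P ! i) (P ! Suc i)" "E (P ! Suc i) (P ! i)"
    using path_edge_sym[OF e] assms(1) unfolding edges by blast+
qed

lemma paths_meet_at_ends: "P \<in> set Ps \<Longrightarrow> Q \<in> set Ps \<Longrightarrow> P \<noteq> Q \<Longrightarrow> set P \<inter> set Q = {u, w}"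
  using internally_disjoint by (metis in_set_conv_nth)

lemma inner_vertex:
  assumes "P \<in> set Ps" "0 < j" "j < a"
  shows "P ! j \<noteq> u" "P ! j \<noteq> w" "P ! j \<in> set P"
  using assms paths[of P] path_ends[of P] nth_eq_iff_index_eq[of P j 0]
    nth_eq_iff_index_eq[of P j a]
  by auto

lemma inner_neighbours:
  assumes P: "P \<in> set Ps" and j: "0 < j" "j < a" and e: "E (P ! j) y"
  shows "y = P ! (j - 1) \<or> y = P ! Suc j"
proof -
  obtain Q i where Q: "Q \<in> set Ps" "Suc i < length Q"
    "(P ! j = Q ! i \<and> y = Q ! Suc i) \<or> (y = Q ! i \<and> P ! j = Q ! Suc i)"
    using e unfolding edges path_edge_def by blast
  have "P ! j \<in> set Q" using Q(2,3) by (auto simp del: nth_mem intro!: nth_mem)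
  then have "Q = P" using paths_meet_at_ends[OF P Q(1)] inner_vertex[OF P j] by blast
  have dP: "distinct P" "length P = a + 1" using paths[OF P] by auto
  then have "i = j \<or> Suc i = j"
    using Q(2,3) \<open>Q = P\<close> j nth_eq_iff_index_eq[OF dP(1)] by auto
  then show ?thesis using Q(3) \<open>Q = P\<close> by auto
qed

lemma hub_neighbours:
  assumes "E u y"
  obtains P where "P \<in> set Ps" "y = P ! 1"
proof -
  obtain Q i where Q: "Q \<in> set Ps" "Suc i < length Q"
    "(u = Q ! i \<and> y = Q ! Suc i) \<or> (y = Q ! i \<and> u = Q ! Suc i)"
    using assms unfolding edges path_edge_def by blast
  have "Q ! k = u \<longleftrightarrow> k = 0" if "k < length Q" for k
    using that paths[OF Q(1)] path_ends[OF Q(1)] nth_eq_iff_index_eq[of Q k 0] by auto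
  then have "Q ! i = u \<Longrightarrow> i = 0" "Q ! Suc i \<noteq> u" using Q(2) by auto
  then have "y = Q ! 1" using Q(3) by auto
  then show ?thesis using that Q(1) by blast
qed

lemma cycle_contains_hub:
  assumes sg: "simple_graph V E" and C: "is_cycle V E cs"
  shows "u \<in> set cs"
proof -
  have cs: "3 \<le> length cs" "distinct cs" "set cs \<subseteq> V" using C unfolding is_cycle_def by auto
  have "card {u, w} \<le> 2" by (simp add: card_insert_if)
  then have "\<not> set cs \<subseteq> {u, w}"
    using card_mono[of "{u, w}" "set cs"] distinct_card[OF cs(2)] cs(1) by auto
  then obtain z where z: "z \<in> set cs" "z \<noteq> u" "z \<noteq> w" by blast
  then obtain P where "P \<in> set Ps" "z \<in> set P" using cs(3) unfolding vertices by blast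
  moreover from this(2) obtain j where "j < length P" "z = P ! j" by (auto simp: in_set_conv_nth)
  ultimately have P: "P \<in> set Ps" "j \<le> a" "z = P ! j" using paths by auto
  then have j: "0 < j" "j < a" using z path_ends[OF P(1)] by (auto simp: le_less intro: gr0I)
  have "P ! (j - d) \<in> set cs" if "d \<le> j" for d
    using that
  proof (induction d)
    case (Suc d)
    then have on_cs: "P ! (j - d) \<in> set cs" and inner: "0 < j - d" "j - d < a" using j by auto
    have "E (P ! (j - d)) (P ! (j - Suc d))"
      using consecutive_adjacent(2)[OF P(1), of "j - Suc d"] Suc.prems j by (simp add: Suc_diff_Suc)
    then show ?case
      using is_cycle_closed_at_degree_two[OF sg C on_cs inner_neighbours[OF P(1) inner]] by simp
  qed (use z P in simp)
  then show ?thesis using path_ends[OF P(1)] by (metis diff_self_eq_0 order_refl)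
qed

lemma cycle_length:
  assumes sg: "simple_graph V E" and C: "is_cycle V E cs"
  shows "length cs = 2 * a"
proof -
  obtain m R where rot: "rotate m cs = u # R"
    using rotate_to_front[OF cycle_contains_hub[OF sg C]] .
  have C1: "is_cycle V E (u # R)" using is_cycle_rotate[OF C, of m] rot by simp
  have C2: "is_cycle V E (u # rev R)"
    using is_cycle_rev[OF sg is_cycle_rotate1[OF C1]] by simp
  have R: "R \<noteq> []" "distinct R" using C1 unfolding is_cycle_iff_successively by auto
  text \<open>The walks around the cycle in both directions leave u along paths of the theta graph
    and are then forced to follow them up to w.\<close>
  have forced: "(u # R') ! a = w \<and> a \<le> length R'"
    if C': "is_cycle V E (u # R')" and R': "R' \<noteq> []" "E u (hd R')" for R'
  proof -
    obtain Q where Q: "Q \<in> set Ps" "hd R' = Q ! 1" using hub_neighbours[OF R'(2)] by blast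
    have Qp: "distinct Q" "length Q = a + 1" using paths[OF Q(1)] by auto
    have "(u # R') ! 1 = Q ! 1" using Q(2) R'(1) by (simp add: hd_conv_nth)
    then have "length Q \<le> length (u # R')" "\<And>i. i < length Q \<Longrightarrow> (u # R') ! i = Q ! i"
      using is_cycle_follows_path[OF C' Qp(1)] Qp(2) length_pos path_ends[OF Q(1)]
        inner_neighbours[OF Q(1)] by auto
    then show ?thesis using Qp(2) path_ends[OF Q(1)] by simp
  qed
  have "R ! (a - 1) = w" "a \<le> length R"
    using forced[OF C1 R(1)] is_cycle_Cons_neighbours(1)[OF C1] length_pos
    by (auto simp: nth_Cons')
  moreover have "rev R ! (a - 1) = w"
    using forced[OF C2] R(1) is_cycle_Cons_neighbours(1)[OF C2] length_pos
    by (auto simp: nth_Cons')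
  moreover have "rev R ! (a - 1) = R ! (length R - a)"
    using \<open>a \<le> length R\<close> length_pos by (simp add: rev_nth)
  ultimately have "R ! (a - 1) = R ! (length R - a)" by simp
  then have "a - 1 = length R - a"
    using nth_eq_iff_index_eq[OF R(2)] \<open>a \<le> length R\<close> length_pos by auto
  then show ?thesis using arg_cong[OF rot, of length] \<open>a \<le> length R\<close> length_pos by simp
qed

end

lemma uniform_theta_equicyclic:
  assumes sg: "simple_graph V E" and theta: "is_uniform_theta V E"
  obtains n where "equicyclic_graph V E n"
proof -
  obtain u w a Ps where "uniform_theta V E u w a Ps"
    using theta unfolding is_uniform_theta_def uniform_theta_def path_edge_def by blast
  then interpret uniform_theta V E u w a Ps .
  have "equicyclic_graph V E (2 * a)" using sg cycle_length by unfold_locales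
  then show ?thesis using that by blast
qed

section \<open>Girth and circumference\<close>

lemma girth_eq_circumference_iff:
  assumes "finite V" "is_cycle V E cs\<^sub>0"
  shows "girth V E = circumference V E \<longleftrightarrow> (\<exists>n. \<forall>cs. is_cycle V E cs \<longrightarrow> length cs = n)"
proof -
  define lengths where "lengths = {length cs | cs. is_cycle V E cs}"
  have "length cs \<le> card V" if "is_cycle V E cs" for cs
    using that card_mono[OF assms(1)] distinct_card unfolding is_cycle_def by metis
  then have "lengths \<subseteq> {..card V}" unfolding lengths_def by auto
  then have fin: "finite lengths" by (rule finite_subset) simp
  have ne: "lengths \<noteq> {}" using assms(2) unfolding lengths_def by blast
  have "Min lengths = Max lengths \<longleftrightarrow> (\<exists>n. lengths \<subseteq> {n})"
  proof
    assume "Min lengths = Max lengths"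
    then have "lengths \<subseteq> {Min lengths}" using fin Min_le Max_ge by fastforce
    then show "\<exists>n. lengths \<subseteq> {n}" by blast
  next
    assume "\<exists>n. lengths \<subseteq> {n}"
    then obtain n where "lengths = {n}" using ne by blast
    then show "Min lengths = Max lengths" by simp
  qed
  moreover have "lengths \<subseteq> {n} \<longleftrightarrow> (\<forall>cs. is_cycle V E cs \<longrightarrow> length cs = n)" for n
    unfolding lengths_def by blast
  moreover have "girth V E = Min lengths" "circumference V E = Max lengths"
    unfolding girth_def circumference_def lengths_def by (rule refl)+
  ultimately show ?thesis by simp
qed

theorem lemma15:
  fixes V :: "'a set" and E :: "'a \<Rightarrow> 'a \<Rightarrow> bool"
  assumes "simple_graph V E" and "two_connected V E"
  shows "girth V E = circumference V E \<longleftrightarrow> is_cycle_graph V E \<or> is_uniform_theta V E"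
proof -
  obtain cs\<^sub>0 where "is_cycle V E cs\<^sub>0" using two_connected_has_cycle[OF assms] .
  then have "girth V E = circumference V E \<longleftrightarrow> (\<exists>n. equicyclic_graph V E n)"
    using girth_eq_circumference_iff[OF simple_graph_finite[OF assms(1)]] assms(1)
    unfolding equicyclic_graph_def by blast
  also have "\<dots> \<longleftrightarrow> is_cycle_graph V E \<or> is_uniform_theta V E"
    using equicyclic_graph.cycle_graph_or_uniform_theta[OF _ assms(2)]
      cycle_graph_equicyclic[OF assms] uniform_theta_equicyclic[OF assms(1)] by blast
  finally show ?thesis .
qed

end
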